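(* The following identity holds: \begin{equation*} \begin{split} &\Delta x \sum_{i=0}^{N-1}\left(\frac{\operatorname{Up}(\varrho^k \widehat u^k u^{k})_{i+3/2} -\operatorname{Up}(\varrho^k \widehat u^k u^{k})_{i-1/2}}{2\Delta x}\right)u_{i+1/2}^k \\ &\qquad = -\Delta x \sum_{i=0}^{N-1}\operatorname{Up}\left(\varrho^k u^{k}\right)_{i+1/2}\partial_{i+1/2}~\left(\frac{|\widehat u^k|^2}{2}\right) + \mathcal{N}_2 \\ &\qquad = -\Delta x\sum_i \partial_t^k \varrho_i\left(\frac{|\widehat u^k|^2}{2}\right)+ \mathcal{N}_2, \end{split} \end{equation*} where the numerical diffusion term $\mathcal{N}_2$ is given by \begin{equation*} \mathcal{N}_2 = \frac{(\Delta x)^2 }{2}\sum_{i=0}^{N-1}\left|\operatorname{Up}\left(\varrho^k u^{k}\right)_{i+1/2}\right|\left|\partial_{i+1/2} \widehat u^k\right|^2. \end{equation*}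
   Context: Finite difference scheme for 1D viscous isentropic compressible Navier–Stokes on $(0,L)$. The interval $[0,L]$ is split into $N$ cells of length $\Delta x=L/N$ with nodes $x_{i-1/2}=i\Delta x$, $i=0,\dots,N$; time levels $t^k=k\Delta t$. Velocities $u^k_{i-1/2}$ live on the nodes with $u^k_{-1/2}=u^k_{N-1/2}=0$, and densities $\varrho^k_i>0$ live on the cells $i=0,\dots,N-1$. Notation: $u^+=\max\{u,0\}$, $u^-=\min\{u,0\}$; $\widehat u_i=\frac{u_{i-1/2}+u_{i+1/2}}{2}$; upwind fluxes $\operatorname{Up}(\varrho u)_{i+1/2}=\varrho_i u^+_{i+1/2}+\varrho_{i+1}u^-_{i+1/2}$ and $\operatorname{Up}(\varrho\widehat u u)_{i+1/2}=(\varrho_i\widehat u_i)u^+_{i+1/2}+(\varrho_{i+1}\widehat u_{i+1})u^-_{i+1/2}$; discrete derivatives $\partial_{i+1/2}f=\frac{f_{i+1}-f_i}{\Delta x}$, $\partial_i v=\frac{v_{i+1/2}-v_{i-1/2}}{\Delta x}$, $\partial_t^k f_i=\frac{f_i^k-f_i^{k-1}}{\Delta t}$. The densities and velocities satisfy the upwind continuity scheme $\partial_t^k\varrho_i+\partial_i\operatorname{Up}(\varrho^k u^k)=0$ (used for the second equality). *)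

theory Defs
  imports Complex_Main
begin

text \<open>Node quantities (velocities, fluxes) are functions
  int => real where index j stands for the node x_{j-1/2} = j dx, j = 0..N.
  Thus u_{i-1/2} = U i and u_{i+1/2} = U (i+1).  Cell quantities (densities)
  are functions int => real with index i for cell i = 0..N-1.  Values outside
  these ranges are irrelevant for the identity (they only occur multiplied by
  boundary velocities, which vanish).\<close>

definition pospart :: "real \<Rightarrow> real" where
  "pospart x = max x 0"

definition negpart :: "real \<Rightarrow> real" where
  "negpart x = min x 0"

definition uhat :: "(int \<Rightarrow> real) \<Rightarrow> int \<Rightarrow> real" where
  "uhat U i = (U i + U (i + 1)) / 2"

text \<open>Upwind flux at node j (i.e. at x_{j-1/2}) of a cell quantity f transported
  by the node velocity U:  Up(f u)_{j-1/2} = f_{j-1} u^+_{j-1/2} + f_j u^-_{j-1/2}.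
  So Up(f u)_{i+1/2} = Up f U (i+1).\<close>
definition Up :: "(int \<Rightarrow> real) \<Rightarrow> (int \<Rightarrow> real) \<Rightarrow> int \<Rightarrow> real" where
  "Up f U j = f (j - 1) * pospart (U j) + f j * negpart (U j)"

text \<open>Discrete derivative of a cell quantity at the node with index j (x_{j-1/2}):
  partial_{i+1/2} f = (f_{i+1} - f_i)/dx = dnode dx f (i+1).\<close>
definition dnode :: "real \<Rightarrow> (int \<Rightarrow> real) \<Rightarrow> int \<Rightarrow> real" where
  "dnode dx f j = (f j - f (j - 1)) / dx"

definition dcell :: "real \<Rightarrow> (int \<Rightarrow> real) \<Rightarrow> int \<Rightarrow> real" where
  "dcell dx V i = (V (i + 1) - V i) / dx"

definition dtime :: "real \<Rightarrow> (nat \<Rightarrow> int \<Rightarrow> real) \<Rightarrow> nat \<Rightarrow> int \<Rightarrow> real" where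
  "dtime dt f k i = (f k i - f (k - 1) i) / dt"

definition numdiff2 :: "real \<Rightarrow> nat \<Rightarrow> (int \<Rightarrow> real) \<Rightarrow> (int \<Rightarrow> real) \<Rightarrow> real" where
  "numdiff2 dx N rho U =
     dx ^ 2 / 2 * (\<Sum>i\<in>{0..<int N}. \<bar>Up rho U (i + 1)\<bar> * \<bar>dnode dx (uhat U) (i + 1)\<bar> ^ 2)"

end

theory Submission
  imports Defs
begin

text \<open>Summation by parts moves the centred difference of the convective flux
  Up(rho hat-u u) onto the velocity, and (u_{i+3/2} - u_{i-1/2})/2 is the jump of hat-u
  across the node x_{i+1/2}.  At each node the upwind flux equals Up(rho u) times the upwind value
  of hat-u, and the identity a b - a^2 = (b^2 - a^2)/2 - (b - a)^2/2 splits the product into the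
  jump of the kinetic energy |hat-u|^2/2 and a square whose sign is that of Up(rho u); this
  square is the numerical diffusion N_2.  A second summation by parts, now with the
  continuity equation, turns the flux of kinetic energy into the time derivative of the
  density.\<close>

lemma atLeastLessThan_int_plus_one: "{0..<1 + int N} = insert (int N) {0..<int N}"
  by auto

lemma sum_by_parts_int:
  fixes P g :: "int \<Rightarrow> 'a::comm_ring"
  shows "(\<Sum>i\<in>{0..<int N}. P (i + 1) * (g (i + 1) - g i))
       = P (int N) * g (int N) - P 0 * g 0 - (\<Sum>i\<in>{0..<int N}. (P (i + 1) - P i) * g i)"
  by (induction N) (simp_all add: atLeastLessThan_int_plus_one algebra_simps)

lemma sum_centred_by_parts_int:
  fixes F U :: "int \<Rightarrow> 'a::comm_ring"
  shows "(\<Sum>i\<in>{0..<int N}. (F (i + 2) - F i) * U (i + 1))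
       = F (int N + 1) * U (int N) + F (int N) * U (int N + 1) - F 1 * U 0 - F 0 * U 1
         - (\<Sum>i\<in>{0..<int N}. F (i + 1) * (U (i + 2) - U i))"
  by (induction N) (simp_all add: atLeastLessThan_int_plus_one algebra_simps)

lemma sum_flux_dnode_eq_neg_dcell:
  assumes "P 0 = 0" and "P (int N) = 0"
  shows "(\<Sum>i\<in>{0..<int N}. P (i + 1) * dnode dx g (i + 1))
       = - (\<Sum>i\<in>{0..<int N}. dcell dx P i * g i)"
proof -
  have "(\<Sum>i\<in>{0..<int N}. P (i + 1) * dnode dx g (i + 1))
      = (\<Sum>i\<in>{0..<int N}. P (i + 1) * (g (i + 1) - g i)) / dx"
    by (simp add: dnode_def sum_divide_distrib)
  also have "\<dots> = - (\<Sum>i\<in>{0..<int N}. (P (i + 1) - P i) * g i) / dx"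
    using assms by (simp add: sum_by_parts_int)
  also have "\<dots> = - (\<Sum>i\<in>{0..<int N}. dcell dx P i * g i)"
    by (simp add: dcell_def sum_divide_distrib)
  finally show ?thesis .
qed

lemma Up_zero: "U j = 0 \<Longrightarrow> Up f U j = 0"
  by (simp add: Up_def pospart_def negpart_def)

lemma Up_mult_upwind_value:
  "Up (\<lambda>i. f i * a i) U j = Up f U j * (if 0 \<le> U j then a (j - 1) else a j)"
  by (simp add: Up_def pospart_def negpart_def)

lemma Up_sign:
  assumes "0 < U j \<Longrightarrow> 0 \<le> f (j - 1)" and "U j < 0 \<Longrightarrow> 0 \<le> f j"
  shows "(0 \<le> U j \<longrightarrow> 0 \<le> Up f U j) \<and> (U j < 0 \<longrightarrow> Up f U j \<le> 0)"
  using assms by (cases "U j = 0") (auto simp: Up_def pospart_def negpart_def mult_nonneg_nonpos)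

lemma upwind_kinetic_energy_split:
  fixes dx :: real
  assumes "dx \<noteq> 0" and "0 < U j \<Longrightarrow> 0 \<le> f (j - 1)" and "U j < 0 \<Longrightarrow> 0 \<le> f j"
  shows "- Up (\<lambda>i. f i * a i) U j * (a j - a (j - 1))
       = - dx * (Up f U j * dnode dx (\<lambda>i. \<bar>a i\<bar> ^ 2 / 2) j)
         + dx ^ 2 / 2 * (\<bar>Up f U j\<bar> * \<bar>dnode dx a j\<bar> ^ 2)"
proof -
  have sign: "(0 \<le> U j \<longrightarrow> 0 \<le> Up f U j) \<and> (U j < 0 \<longrightarrow> Up f U j \<le> 0)"
    using Up_sign assms(2,3) by blast
  show ?thesis
    unfolding Up_mult_upwind_value
    using sign \<open>dx \<noteq> 0\<close>
    by (cases "0 \<le> U j") (auto simp: dnode_def power2_eq_square field_simps)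
qed

lemma convective_term_upwind_split:
  fixes f U :: "int \<Rightarrow> real" and dx :: real
  assumes "dx \<noteq> 0" and "U 0 = 0" and "U (int N) = 0"
    and f_nonneg: "\<And>i. 0 \<le> i \<Longrightarrow> i < int N \<Longrightarrow> 0 \<le> f i"
  shows "dx * (\<Sum>i\<in>{0..<int N}.
            ((Up (\<lambda>j. f j * uhat U j) U (i + 2) - Up (\<lambda>j. f j * uhat U j) U i) / (2 * dx))
            * U (i + 1))
       = - dx * (\<Sum>i\<in>{0..<int N}. Up f U (i + 1) * dnode dx (\<lambda>j. \<bar>uhat U j\<bar> ^ 2 / 2) (i + 1))
         + numdiff2 dx N f U"
proof -
  define F where "F = Up (\<lambda>j. f j * uhat U j) U"
  have F_boundary: "F 0 = 0" "F (int N) = 0"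
    using assms(2,3) by (simp_all add: F_def Up_zero)
  have split: "- F (i + 1) * (uhat U (i + 1) - uhat U i)
      = - dx * (Up f U (i + 1) * dnode dx (\<lambda>j. \<bar>uhat U j\<bar> ^ 2 / 2) (i + 1))
        + dx ^ 2 / 2 * (\<bar>Up f U (i + 1)\<bar> * \<bar>dnode dx (uhat U) (i + 1)\<bar> ^ 2)"
    if "i \<in> {0..<int N}" for i
  proof -
    have "U (i + 1) < 0 \<Longrightarrow> 0 \<le> f (i + 1)"
      using that f_nonneg \<open>U (int N) = 0\<close> by (cases "i + 1 = int N") auto
    then show ?thesis
      using upwind_kinetic_energy_split[of dx U "i + 1" f "uhat U"] that f_nonneg \<open>dx \<noteq> 0\<close>
      by (simp add: F_def)
  qed
  have "dx * (\<Sum>i\<in>{0..<int N}. ((F (i + 2) - F i) / (2 * dx)) * U (i + 1))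
      = (\<Sum>i\<in>{0..<int N}. (F (i + 2) - F i) * U (i + 1)) / 2"
    using \<open>dx \<noteq> 0\<close> by (simp add: sum_distrib_left sum_divide_distrib)
  also have "\<dots> = - (\<Sum>i\<in>{0..<int N}. F (i + 1) * (U (i + 2) - U i)) / 2"
    using F_boundary assms(2,3) by (simp add: sum_centred_by_parts_int)
  also have "\<dots> = (\<Sum>i\<in>{0..<int N}. - F (i + 1) * (uhat U (i + 1) - uhat U i))"
    by (simp add: uhat_def sum_divide_distrib sum_negf[symmetric] algebra_simps
        add_divide_distrib diff_divide_distrib)
  also have "\<dots> = - dx * (\<Sum>i\<in>{0..<int N}.
        Up f U (i + 1) * dnode dx (\<lambda>j. \<bar>uhat U j\<bar> ^ 2 / 2) (i + 1)) + numdiff2 dx N f U"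
    unfolding numdiff2_def sum_distrib_left sum.distrib[symmetric]
    using split by (rule sum.cong[OF refl])
  finally show ?thesis
    by (simp add: F_def)
qed

lemma kinetic_energy_flux_eq_time_derivative:
  fixes f U r g :: "int \<Rightarrow> real"
  assumes "U 0 = 0" and "U (int N) = 0"
    and continuity: "\<And>i. 0 \<le> i \<Longrightarrow> i < int N \<Longrightarrow> r i + dcell dx (Up f U) i = 0"
  shows "(\<Sum>i\<in>{0..<int N}. Up f U (i + 1) * dnode dx g (i + 1)) = (\<Sum>i\<in>{0..<int N}. r i * g i)"
proof -
  have "(\<Sum>i\<in>{0..<int N}. Up f U (i + 1) * dnode dx g (i + 1))
      = - (\<Sum>i\<in>{0..<int N}. dcell dx (Up f U) i * g i)"
    using assms(1,2) by (simp add: sum_flux_dnode_eq_neg_dcell Up_zero)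
  also have "\<dots> = (\<Sum>i\<in>{0..<int N}. r i * g i)"
    using continuity by (simp add: sum_negf[symmetric] eq_neg_iff_add_eq_0[symmetric])
  finally show ?thesis .
qed

theorem lemma3p2:
  fixes L dt :: real and N k :: nat
    and rho u :: "nat \<Rightarrow> int \<Rightarrow> real"
  defines "dx \<equiv> L / real N"
  assumes L_pos: "L > 0" and N_pos: "N > 0" and dt_pos: "dt > 0"
    and k_pos: "k \<ge> 1"
    and bc: "\<And>m. u m 0 = 0 \<and> u m (int N) = 0"
    and rho_pos: "\<And>m i. 0 \<le> i \<Longrightarrow> i < int N \<Longrightarrow> rho m i > 0"
    and cont: "\<And>m i. m \<ge> 1 \<Longrightarrow> 0 \<le> i \<Longrightarrow> i < int N \<Longrightarrow>
                 dtime dt rho m i + dcell dx (Up (rho m) (u m)) i = 0"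
  shows "dx * (\<Sum>i\<in>{0..<int N}.
            ((Up (\<lambda>j. rho k j * uhat (u k) j) (u k) (i + 2)
              - Up (\<lambda>j. rho k j * uhat (u k) j) (u k) i) / (2 * dx)) * u k (i + 1))
         = - dx * (\<Sum>i\<in>{0..<int N}.
              Up (rho k) (u k) (i + 1) * dnode dx (\<lambda>j. \<bar>uhat (u k) j\<bar> ^ 2 / 2) (i + 1))
           + numdiff2 dx N (rho k) (u k)
       \<and> - dx * (\<Sum>i\<in>{0..<int N}.
              Up (rho k) (u k) (i + 1) * dnode dx (\<lambda>j. \<bar>uhat (u k) j\<bar> ^ 2 / 2) (i + 1))
           + numdiff2 dx N (rho k) (u k)
         = - dx * (\<Sum>i\<in>{0..<int N}. dtime dt rho k i * (\<bar>uhat (u k) i\<bar> ^ 2 / 2))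
           + numdiff2 dx N (rho k) (u k)"
proof -
  have "dx \<noteq> 0"
    using L_pos N_pos by (simp add: dx_def)
  have boundary: "u k 0 = 0" "u k (int N) = 0"
    using bc by simp_all
  have rho_nonneg: "0 \<le> rho k i" if "0 \<le> i" "i < int N" for i
    using rho_pos[OF that, of k] by simp
  note convective = convective_term_upwind_split[OF \<open>dx \<noteq> 0\<close> boundary rho_nonneg]
  have energy: "(\<Sum>i\<in>{0..<int N}.
      Up (rho k) (u k) (i + 1) * dnode dx (\<lambda>j. \<bar>uhat (u k) j\<bar> ^ 2 / 2) (i + 1))
    = (\<Sum>i\<in>{0..<int N}. dtime dt rho k i * (\<bar>uhat (u k) i\<bar> ^ 2 / 2))"
    using boundary cont[OF k_pos] by (rule kinetic_energy_flux_eq_time_derivative)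
  show ?thesis
    unfolding energy[symmetric] using convective by simp
qed

end
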